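(* Let $(C_*,\partial_C,\ell_C)$ and $(D_*,\partial_D,\ell_D)$ be ascending chain complexes over a field $\kappa$ such that each $C_k$ admits an $\ell_C$-orthogonal basis, each $D_k$ admits an $\ell_D$-orthogonal basis, and $C_k=D_k=0$ for all $k<0$. Then every filtered quasi-isomorphism $f\colon C_*\to D_*$ is a filtered homotopy equivalence.
   Context: An ascending chain complex over $\kappa$ is a triple $(C_*,\partial,\ell)$ where $(C_*=\bigoplus_{k\in\mathbb{Z}}C_k,\partial)$ is a chain complex of $\kappa$-vector spaces and $\ell\colon C_*\to\mathbb{R}\cup\{-\infty\}$ satisfies: $\ell(x)=-\infty$ iff $x=0$; $\ell(\sum_i c_ix_i)\le\max\{\ell(x_i): c_i\neq 0\}$, with equality if the $x_i$ lie in pairwise distinct degrees; and $\ell(\partial x)\le\ell(x)$. A subset $S$ of nonzero vectors is $\ell$-orthogonal if $\ell(\sum c_iv_i)=\max\{\ell(v_i):c_i\ne0\}$ for all finitely many distinct $v_i\in S$ and $c_i\in\kappa$. A filtered chain map $f\colon C_*\to D_*$ is a chain map with $\ell_D\circ f\le\ell_C$; it is a filtered quasi-isomorphism if for each $k\in\mathbb{Z}$ and $t\in\mathbb{R}$ the induced map $H_k(C^{\le t}_* )\to H_k(D^{\le t}_* )$ is an isomorphism, where $C^{\le t}_*=\{c:\ell_C(c)\le t\}$. A filtered homotopy equivalence is a filtered chain map $f$ for which there exist a filtered chain map $g\colon D_*\to C_*$ and maps $K^C\colon C_*\to C_{*+1}$, $K^D\colon D_*\to D_{*+1}$ with $\ell_C\circ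 K^C\le\ell_C$, $\ell_D\circ K^D\le\ell_D$, $\partial_CK^C+K^C\partial_C=1-gf$, $\partial_DK^D+K^D\partial_D=1-fg$. *)

theory Defs
  imports Main "HOL-Library.Extended_Real"
begin

(* A graded vector space C_* = (+)_k C_k over a field 'k is represented by a
   family of subspaces  C :: int => 'v set  of one ambient vector space
   (scalar multiplication sc); the summand C_k is  C k.  All data of degree 0
   (resp. +1, -1) on C_* are represented by their degree-k components.
   The filtration function ell on C_* is determined by its values on the
   summands, since ell(sum of elements in distinct degrees) = max of the ell's;
   thus ell is given degreewise as  l k : C k -> ereal  (values in R u {-inf}). *)

definition lin_on :: "('k::field \<Rightarrow> 'v::ab_group_add \<Rightarrow> 'v) \<Rightarrow> ('k \<Rightarrow> 'w::ab_group_add \<Rightarrow> 'w)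
    \<Rightarrow> 'v set \<Rightarrow> ('v \<Rightarrow> 'w) \<Rightarrow> bool" where
  "lin_on sv sw A h \<longleftrightarrow>
     (\<forall>x\<in>A. \<forall>y\<in>A. h (x + y) = h x + h y) \<and> (\<forall>a. \<forall>x\<in>A. h (sv a x) = sw a (h x))"

definition asc_chain_complex ::
  "('k::field \<Rightarrow> 'v::ab_group_add \<Rightarrow> 'v) \<Rightarrow> (int \<Rightarrow> 'v set) \<Rightarrow> (int \<Rightarrow> 'v \<Rightarrow> 'v)
     \<Rightarrow> (int \<Rightarrow> 'v \<Rightarrow> ereal) \<Rightarrow> bool" where
  "asc_chain_complex sc C d l \<longleftrightarrow>
     vector_space sc \<and>
     (\<forall>k. module.subspace sc (C k)) \<and>
     (\<forall>k. \<forall>x\<in>C k. d k x \<in> C (k - 1)) \<and>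
     (\<forall>k. lin_on sc sc (C k) (d k)) \<and>
     (\<forall>k. \<forall>x\<in>C k. d (k - 1) (d k x) = 0) \<and>
     (\<forall>k. \<forall>x\<in>C k. l k x \<noteq> \<infinity> \<and> (l k x = - \<infinity> \<longleftrightarrow> x = 0)) \<and>
     (\<forall>k. \<forall>S c. finite S \<and> S \<subseteq> C k \<longrightarrow>
          l k (\<Sum>x\<in>S. sc (c x) x) \<le> (SUP x\<in>{x\<in>S. c x \<noteq> 0}. l k x)) \<and>
     (\<forall>k. \<forall>x\<in>C k. l (k - 1) (d k x) \<le> l k x)"

definition orth_basis ::
  "('k::field \<Rightarrow> 'v::ab_group_add \<Rightarrow> 'v) \<Rightarrow> 'v set \<Rightarrow> ('v \<Rightarrow> ereal) \<Rightarrow> 'v set \<Rightarrow> bool" where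
  "orth_basis sc Ck lk B \<longleftrightarrow>
     B \<subseteq> Ck \<and> 0 \<notin> B \<and> \<not> module.dependent sc B \<and> module.span sc B = Ck \<and>
     (\<forall>S c. finite S \<and> S \<subseteq> B \<longrightarrow>
          lk (\<Sum>x\<in>S. sc (c x) x) = (SUP x\<in>{x\<in>S. c x \<noteq> 0}. lk x))"

definition filtered_chain_map ::
  "('k::field \<Rightarrow> 'v::ab_group_add \<Rightarrow> 'v) \<Rightarrow> (int \<Rightarrow> 'v set) \<Rightarrow> (int \<Rightarrow> 'v \<Rightarrow> 'v) \<Rightarrow> (int \<Rightarrow> 'v \<Rightarrow> ereal)
   \<Rightarrow> ('k \<Rightarrow> 'w::ab_group_add \<Rightarrow> 'w) \<Rightarrow> (int \<Rightarrow> 'w set) \<Rightarrow> (int \<Rightarrow> 'w \<Rightarrow> 'w) \<Rightarrow> (int \<Rightarrow> 'w \<Rightarrow> ereal)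
   \<Rightarrow> (int \<Rightarrow> 'v \<Rightarrow> 'w) \<Rightarrow> bool" where
  "filtered_chain_map sC C dC lC sD D dD lD f \<longleftrightarrow>
     (\<forall>k. \<forall>x\<in>C k. f k x \<in> D k) \<and>
     (\<forall>k. lin_on sC sD (C k) (f k)) \<and>
     (\<forall>k. \<forall>x\<in>C k. dD k (f k x) = f (k - 1) (dC k x)) \<and>
     (\<forall>k. \<forall>x\<in>C k. lD k (f k x) \<le> lC k x)"

definition sub_le :: "(int \<Rightarrow> 'v set) \<Rightarrow> (int \<Rightarrow> 'v \<Rightarrow> ereal) \<Rightarrow> real \<Rightarrow> int \<Rightarrow> 'v set" where
  "sub_le C l t k = {x \<in> C k. l k x \<le> ereal t}"

(* the map H_k(C^{<=t}) -> H_k(D^{<=t}) induced by f is bijective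
   (written out on cycles and boundaries of the filtered subcomplexes) *)
definition induces_homology_iso ::
  "(int \<Rightarrow> 'v::ab_group_add set) \<Rightarrow> (int \<Rightarrow> 'v \<Rightarrow> 'v) \<Rightarrow> (int \<Rightarrow> 'v \<Rightarrow> ereal)
   \<Rightarrow> (int \<Rightarrow> 'w::ab_group_add set) \<Rightarrow> (int \<Rightarrow> 'w \<Rightarrow> 'w) \<Rightarrow> (int \<Rightarrow> 'w \<Rightarrow> ereal)
   \<Rightarrow> (int \<Rightarrow> 'v \<Rightarrow> 'w) \<Rightarrow> real \<Rightarrow> int \<Rightarrow> bool" where
  "induces_homology_iso C dC lC D dD lD f t k \<longleftrightarrow>
     (\<forall>z\<in>sub_le D lD t k. dD k z = 0 \<longrightarrow>
        (\<exists>c\<in>sub_le C lC t k. dC k c = 0 \<and> (\<exists>y\<in>sub_le D lD t (k + 1). z = f k c + dD (k + 1) y))) \<and>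
     (\<forall>c\<in>sub_le C lC t k. dC k c = 0 \<longrightarrow>
        (\<exists>y\<in>sub_le D lD t (k + 1). f k c = dD (k + 1) y) \<longrightarrow>
        (\<exists>y'\<in>sub_le C lC t (k + 1). c = dC (k + 1) y'))"

definition filtered_quasi_iso where
  "filtered_quasi_iso sC C dC lC sD D dD lD f \<longleftrightarrow>
     filtered_chain_map sC C dC lC sD D dD lD f \<and>
     (\<forall>k t. induces_homology_iso C dC lC D dD lD f t k)"

definition filtered_homotopy_op ::
  "('k::field \<Rightarrow> 'v::ab_group_add \<Rightarrow> 'v) \<Rightarrow> (int \<Rightarrow> 'v set) \<Rightarrow> (int \<Rightarrow> 'v \<Rightarrow> ereal)
   \<Rightarrow> (int \<Rightarrow> 'v \<Rightarrow> 'v) \<Rightarrow> bool" where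
  "filtered_homotopy_op sC C lC K \<longleftrightarrow>
     (\<forall>k. \<forall>x\<in>C k. K k x \<in> C (k + 1)) \<and>
     (\<forall>k. lin_on sC sC (C k) (K k)) \<and>
     (\<forall>k. \<forall>x\<in>C k. lC (k + 1) (K k x) \<le> lC k x)"

definition filtered_homotopy_equiv where
  "filtered_homotopy_equiv sC C dC lC sD D dD lD f \<longleftrightarrow>
     filtered_chain_map sC C dC lC sD D dD lD f \<and>
     (\<exists>g KC KD.
        filtered_chain_map sD D dD lD sC C dC lC g \<and>
        filtered_homotopy_op sC C lC KC \<and>
        filtered_homotopy_op sD D lD KD \<and>
        (\<forall>k. \<forall>x\<in>C k. dC (k + 1) (KC k x) + KC (k - 1) (dC k x) = x - g k (f k x)) \<and>
        (\<forall>k. \<forall>y\<in>D k. dD (k + 1) (KD k y) + KD (k - 1) (dD k y) = y - f k (g k y)))"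

end

(* A filtered chain map f : C -> D is a filtered homotopy equivalence as soon as its mapping
   cone, with Cone_n = C_(n-1) (+) D_n, d (c, y) = (- d c, f c + d y) and
   l (c, y) = max (l c) (l y), admits a filtered contraction K (d K + K d = 1, l o K <= l):
   the D -> C entry of K is a filtered homotopy inverse of f, and its diagonal entries are the
   two homotopies.  If f is a filtered quasi-isomorphism, the cone is filtered acyclic: a cycle
   of filtration level <= t bounds a chain of level <= t (this is injectivity on H(C^{<=t}) in
   one degree and surjectivity in the next).  The cone inherits orthogonal bases from C and D
   and vanishes in negative degrees, so a contraction can be built degree by degree: on a basis
   vector e of degree n, K e is a filtered preimage of the cycle e - K (d e), and orthogonality
   makes the linear extension from the basis filtered. *)

theory Submission
  imports Defs "HOL-Library.Product_Plus"
begin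

lemma lin_on_add:
  "lin_on s1 s2 A h \<Longrightarrow> x \<in> A \<Longrightarrow> y \<in> A \<Longrightarrow> h (x + y) = h x + h y"
  unfolding lin_on_def by blast

lemma lin_on_scale: "lin_on s1 s2 A h \<Longrightarrow> x \<in> A \<Longrightarrow> h (s1 a x) = s2 a (h x)"
  unfolding lin_on_def by blast

lemma lin_on_zero:
  assumes "lin_on s1 s2 A h" "0 \<in> A"
  shows "h 0 = 0"
proof -
  have "h (0 + 0) = h 0 + h 0" using lin_on_add[OF assms(1)] assms(2) by blast
  then show ?thesis by simp
qed

lemma lin_on_neg:
  assumes "lin_on s1 s2 A h" "module s1" "module.subspace s1 A" "x \<in> A"
  shows "h (- x) = - h x"
proof -
  have "- x \<in> A" "0 \<in> A"
    using module.subspace_neg[OF assms(2-4)] module.subspace_0[OF assms(2,3)] .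
  then have "h x + h (- x) = 0"
    using lin_on_add[OF assms(1) assms(4), of "- x"] lin_on_zero[OF assms(1)] by simp
  then show ?thesis by (simp add: add_eq_0_iff2)
qed

lemma lin_on_diff:
  assumes "lin_on s1 s2 A h" "module s1" "module.subspace s1 A" "x \<in> A" "y \<in> A"
  shows "h (x - y) = h x - h y"
  using lin_on_add[OF assms(1) assms(4) module.subspace_neg[OF assms(2,3,5)]]
    lin_on_neg[OF assms(1-3,5)] by simp

lemma lin_on_comp:
  "lin_on s1 s2 A h \<Longrightarrow> h ` A \<subseteq> A' \<Longrightarrow> lin_on s2 s3 A' h' \<Longrightarrow> lin_on s1 s3 A (h' \<circ> h)"
  unfolding lin_on_def by (auto simp: image_subset_iff)

lemma lin_on_plus:
  "lin_on s1 s2 A h \<Longrightarrow> lin_on s1 s2 A h' \<Longrightarrow> module s2 \<Longrightarrow> lin_on s1 s2 A (\<lambda>x. h x + h' x)"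
  unfolding lin_on_def by (simp add: module.scale_right_distrib algebra_simps)

lemma lin_on_id: "lin_on s s A id"
  unfolding lin_on_def by simp

lemma lin_on_const_zero: "module s2 \<Longrightarrow> lin_on s1 s2 A (\<lambda>x. 0)"
  unfolding lin_on_def by (simp add: module.scale_zero_right)

lemma lin_on_uminus: "module s \<Longrightarrow> lin_on s s A uminus"
  unfolding lin_on_def by (simp add: module.scale_minus_right)

lemma lin_on_sum:
  assumes "lin_on s1 s2 A h" "module s1" "module.subspace s1 A" "module s2"
    and "finite S" "S \<subseteq> A"
  shows "h (\<Sum>x\<in>S. s1 (a x) x) = (\<Sum>x\<in>S. s2 (a x) (h x))"
  using assms(5,6)
proof (induction S rule: finite_induct)
  case empty
  show ?case using lin_on_zero[OF assms(1) module.subspace_0[OF assms(2,3)]] by simp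
next
  case (insert x S)
  have "s1 (a x) x \<in> A" "(\<Sum>x\<in>S. s1 (a x) x) \<in> A"
    using insert.prems module.subspace_scale[OF assms(2,3)]
    by (auto intro!: module.subspace_sum[OF assms(2,3)])
  then show ?case
    using insert lin_on_add[OF assms(1)] lin_on_scale[OF assms(1)] by simp
qed

lemma lin_on_eq_on_span:
  assumes "lin_on s1 s2 A h" "lin_on s1 s2 A h'" "module s1" "module s2"
    and "module.span s1 B = A" "\<forall>b\<in>B. h b = h' b" "x \<in> A"
  shows "h x = h' x"
proof -
  have sub: "module.subspace s1 A" and "B \<subseteq> A"
    using module.subspace_span[OF assms(3)] module.span_superset[OF assms(3)] assms(5) by auto
  moreover obtain S a where "finite S" "S \<subseteq> B" "x = (\<Sum>b\<in>S. s1 (a b) b)"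
    using assms(7) unfolding assms(5)[symmetric] module.span_explicit[OF assms(3)] by blast
  ultimately show ?thesis
    using lin_on_sum[OF assms(1,3) sub assms(4)] lin_on_sum[OF assms(2,3) sub assms(4)] assms(6)
    by (auto simp: subset_iff intro!: sum.cong)
qed

section \<open>Ascending chain complexes\<close>

definition l_orthogonal :: "('k::field \<Rightarrow> 'v::ab_group_add \<Rightarrow> 'v) \<Rightarrow> ('v \<Rightarrow> ereal) \<Rightarrow> 'v set \<Rightarrow> bool"
  where "l_orthogonal sc lk B \<longleftrightarrow>
    (\<forall>S c. finite S \<and> S \<subseteq> B \<longrightarrow> lk (\<Sum>x\<in>S. sc (c x) x) = (SUP x\<in>{x\<in>S. c x \<noteq> 0}. lk x))"

lemma orth_basis_iff:
  "orth_basis sc Ck lk B \<longleftrightarrow>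
    B \<subseteq> Ck \<and> 0 \<notin> B \<and> \<not> module.dependent sc B \<and> module.span sc B = Ck \<and> l_orthogonal sc lk B"
  unfolding orth_basis_def l_orthogonal_def ..

lemma l_orthogonal_sum_inj:
  assumes "l_orthogonal sc lk B" "finite I" "inj_on v I" "v ` I \<subseteq> B"
  shows "lk (\<Sum>i\<in>I. sc (a i) (v i)) = (SUP i\<in>{i\<in>I. a i \<noteq> 0}. lk (v i))"
proof -
  define c where "c = a \<circ> inv_into I v"
  have c_v: "c (v i) = a i" if "i \<in> I" for i
    using assms(3) that by (simp add: c_def)
  have "(\<Sum>i\<in>I. sc (a i) (v i)) = (\<Sum>x\<in>v ` I. sc (c x) x)"
    using assms(3) c_v by (simp add: sum.reindex)
  moreover have "{x \<in> v ` I. c x \<noteq> 0} = v ` {i\<in>I. a i \<noteq> 0}"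
    using c_v by auto
  ultimately show ?thesis
    using assms(1,2,4) unfolding l_orthogonal_def by (simp add: image_image)
qed

definition filtered_acyclic ::
  "(int \<Rightarrow> 'v::ab_group_add set) \<Rightarrow> (int \<Rightarrow> 'v \<Rightarrow> 'v) \<Rightarrow> (int \<Rightarrow> 'v \<Rightarrow> ereal) \<Rightarrow> bool"
  where "filtered_acyclic C d l \<longleftrightarrow>
    (\<forall>n. \<forall>x\<in>C n. d n x = 0 \<longrightarrow> (\<exists>y\<in>C (n + 1). d (n + 1) y = x \<and> l (n + 1) y \<le> l n x))"

definition filtered_contraction ::
  "('k::field \<Rightarrow> 'v::ab_group_add \<Rightarrow> 'v) \<Rightarrow> (int \<Rightarrow> 'v set) \<Rightarrow> (int \<Rightarrow> 'v \<Rightarrow> 'v)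
    \<Rightarrow> (int \<Rightarrow> 'v \<Rightarrow> ereal) \<Rightarrow> (int \<Rightarrow> 'v \<Rightarrow> 'v) \<Rightarrow> bool"
  where "filtered_contraction sc C d l K \<longleftrightarrow>
    filtered_homotopy_op sc C l K \<and> (\<forall>k. \<forall>x\<in>C k. d (k + 1) (K k x) + K (k - 1) (d k x) = x)"

lemma filtered_contractionD:
  assumes "filtered_contraction sc C d l K"
  shows "x \<in> C k \<Longrightarrow> K k x \<in> C (k + 1)" and "lin_on sc sc (C k) (K k)"
    and "x \<in> C k \<Longrightarrow> l (k + 1) (K k x) \<le> l k x"
    and "x \<in> C k \<Longrightarrow> d (k + 1) (K k x) + K (k - 1) (d k x) = x"
  using assms unfolding filtered_contraction_def filtered_homotopy_op_def by blast+

locale asc_complex =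
  fixes sc :: "'k::field \<Rightarrow> 'v::ab_group_add \<Rightarrow> 'v"
    and C :: "int \<Rightarrow> 'v set" and d :: "int \<Rightarrow> 'v \<Rightarrow> 'v" and l :: "int \<Rightarrow> 'v \<Rightarrow> ereal"
  assumes asc_chain_complex: "asc_chain_complex sc C d l"
begin

sublocale vector_space sc
  using asc_chain_complex unfolding asc_chain_complex_def by (elim conjE)

lemma asc_chain_complexD:
  "\<forall>k. subspace (C k)"
  "\<forall>k. \<forall>x\<in>C k. d k x \<in> C (k - 1)"
  "\<forall>k. lin_on sc sc (C k) (d k)"
  "\<forall>k. \<forall>x\<in>C k. d (k - 1) (d k x) = 0"
  "\<forall>k. \<forall>x\<in>C k. l k x \<noteq> \<infinity> \<and> (l k x = - \<infinity> \<longleftrightarrow> x = 0)"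
  "\<forall>k. \<forall>S c. finite S \<and> S \<subseteq> C k \<longrightarrow>
     l k (\<Sum>x\<in>S. sc (c x) x) \<le> (SUP x\<in>{x\<in>S. c x \<noteq> 0}. l k x)"
  "\<forall>k. \<forall>x\<in>C k. l (k - 1) (d k x) \<le> l k x"
  using asc_chain_complex unfolding asc_chain_complex_def by simp_all

lemma subspace_C: "subspace (C k)"
  using asc_chain_complexD(1) by blast

lemma d_closed: "x \<in> C k \<Longrightarrow> d k x \<in> C (k - 1)"
  using asc_chain_complexD(2) by blast

lemma lin_on_d: "lin_on sc sc (C k) (d k)"
  using asc_chain_complexD(3) by blast

lemma d_d: "x \<in> C k \<Longrightarrow> d (k - 1) (d k x) = 0"
  using asc_chain_complexD(4) by blast

lemma l_neq_infinity: "x \<in> C k \<Longrightarrow> l k x \<noteq> \<infinity>"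
  using asc_chain_complexD(5) by blast

lemma l_eq_minf_iff: "x \<in> C k \<Longrightarrow> l k x = - \<infinity> \<longleftrightarrow> x = 0"
  using asc_chain_complexD(5) by blast

lemma l_sum_scale_le:
  "finite S \<Longrightarrow> S \<subseteq> C k \<Longrightarrow> l k (\<Sum>x\<in>S. sc (c x) x) \<le> (SUP x\<in>{x\<in>S. c x \<noteq> 0}. l k x)"
  using asc_chain_complexD(6) by blast

lemma l_d_le: "x \<in> C k \<Longrightarrow> l (k - 1) (d k x) \<le> l k x"
  using asc_chain_complexD(7) by blast

lemma zero_mem_C: "0 \<in> C k"
  using subspace_0[OF subspace_C] .

lemma l_zero: "l k 0 = - \<infinity>"
  using l_eq_minf_iff[OF zero_mem_C] by simp

lemma d_zero: "d k 0 = 0"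
  using lin_on_zero[OF lin_on_d zero_mem_C] .

lemma d_uminus: "x \<in> C k \<Longrightarrow> d k (- x) = - d k x"
  using lin_on_neg[OF lin_on_d module_axioms subspace_C] .

lemma d_diff: "x \<in> C k \<Longrightarrow> y \<in> C k \<Longrightarrow> d k (x - y) = d k x - d k y"
  using lin_on_diff[OF lin_on_d module_axioms subspace_C] .

lemma l_finite: "x \<in> C k \<Longrightarrow> x \<noteq> 0 \<Longrightarrow> \<exists>r. l k x = ereal r"
  using l_neq_infinity l_eq_minf_iff by (cases "l k x") auto

lemma l_scale_le: "x \<in> C k \<Longrightarrow> l k (sc a x) \<le> l k x"
  using l_sum_scale_le[of "{x}" k "\<lambda>_. a"] by (cases "a = 0") (auto simp: l_zero)

lemma l_add_le:
  assumes "x \<in> C k" "y \<in> C k"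
  shows "l k (x + y) \<le> max (l k x) (l k y)"
proof (cases "x = y")
  case True
  then have "x + y = sc (1 + 1) x" by (simp only: scale_left_distrib scale_one)
  then show ?thesis using l_scale_le[OF assms(1)] True by simp
next
  case False
  have "l k (x + y) \<le> (SUP z\<in>{z \<in> {x, y}. (1::'k) \<noteq> 0}. l k z)"
    using l_sum_scale_le[of "{x, y}" k "\<lambda>_. 1"] assms False by simp
  also have "{z \<in> {x, y}. (1::'k) \<noteq> 0} = {x, y}" by auto
  finally show ?thesis by (simp add: sup_max)
qed

lemma l_uminus: "x \<in> C k \<Longrightarrow> l k (- x) = l k x"
  using l_scale_le[of x k "- 1"] l_scale_le[of "- x" k "- 1"] subspace_neg[OF subspace_C]
  by (simp add: antisym)

lemma l_diff_le: "x \<in> C k \<Longrightarrow> y \<in> C k \<Longrightarrow> l k (x - y) \<le> max (l k x) (l k y)"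
  using l_add_le[of x k "- y"] l_uminus[of y k] subspace_neg[OF subspace_C] by simp

lemma l_sum_le:
  assumes "finite I" "\<And>i. i \<in> I \<Longrightarrow> w i \<in> C k" "\<And>i. i \<in> I \<Longrightarrow> l k (w i) \<le> t"
  shows "l k (sum w I) \<le> t"
  using assms
proof (induction I rule: finite_induct)
  case empty
  then show ?case by (simp add: l_zero)
next
  case (insert i I)
  have "sum w I \<in> C k" using insert.prems(1) by (auto intro: subspace_sum[OF subspace_C])
  then have "l k (w i + sum w I) \<le> max (l k (w i)) (l k (sum w I))"
    using l_add_le insert.prems(1) by blast
  also have "\<dots> \<le> t" using insert by simp
  finally show ?case using insert.hyps by simp
qed

lemma l_sum_scale_le_bound:
  assumes "finite S" "\<And>i. i \<in> S \<Longrightarrow> v i \<in> C k" "\<And>i. i \<in> S \<Longrightarrow> a i \<noteq> 0 \<Longrightarrow> l k (v i) \<le> t"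
  shows "l k (\<Sum>i\<in>S. sc (a i) (v i)) \<le> t"
proof (rule l_sum_le[OF assms(1)])
  fix i assume i: "i \<in> S"
  show "sc (a i) (v i) \<in> C k" using subspace_scale[OF subspace_C assms(2)[OF i]] .
  show "l k (sc (a i) (v i)) \<le> t"
    using order_trans[OF l_scale_le[OF assms(2)[OF i]] assms(3)[OF i]] by (cases "a i = 0") (auto simp: l_zero)
qed

lemma l_orthogonal_independent:
  assumes "B \<subseteq> C k" "0 \<notin> B" "l_orthogonal sc (l k) B"
  shows "independent B"
  unfolding independent_explicit_module
proof (intro allI impI)
  fix S u b
  assume S: "finite S" "S \<subseteq> B" and sum_0: "(\<Sum>x\<in>S. sc (u x) x) = 0" and b: "b \<in> S"
  show "u b = 0"
  proof (rule ccontr)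
    assume "u b \<noteq> 0"
    then have "l k b \<le> (SUP x\<in>{x\<in>S. u x \<noteq> 0}. l k x)"
      using b by (auto intro: SUP_upper)
    also have "\<dots> = l k (\<Sum>x\<in>S. sc (u x) x)"
      using assms(3) S unfolding l_orthogonal_def by simp
    also have "\<dots> = - \<infinity>"
      using sum_0 l_zero by simp
    finally show False
      using l_eq_minf_iff[of b k] assms(1,2) S(2) b by auto
  qed
qed

lemma orth_basis_lin_on_le:
  assumes B: "orth_basis sc (C n) (l n) B" and F: "lin_on sc sc (C n) F"
    and F_B: "\<And>b. b \<in> B \<Longrightarrow> F b \<in> C m" "\<And>b. b \<in> B \<Longrightarrow> l m (F b) \<le> l n b"
    and x: "x \<in> C n"
  shows "F x \<in> C m" "l m (F x) \<le> l n x"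
proof -
  have B_C: "B \<subseteq> C n" and span_B: "span B = C n" and orth: "l_orthogonal sc (l n) B"
    using B unfolding orth_basis_iff by auto
  obtain S a where S: "finite S" "S \<subseteq> B" and x_eq: "x = (\<Sum>b\<in>S. sc (a b) b)"
    using x unfolding span_B[symmetric] span_explicit by blast
  have S_C: "b \<in> C n" and F_b: "F b \<in> C m" if "b \<in> S" for b
    using that S(2) B_C F_B(1) by auto
  have F_x: "F x = (\<Sum>b\<in>S. sc (a b) (F b))"
    unfolding x_eq using S B_C by (intro lin_on_sum[OF F module_axioms subspace_C module_axioms]) auto
  show "F x \<in> C m"
    unfolding F_x using F_b by (auto intro!: subspace_sum[OF subspace_C] subspace_scale[OF subspace_C])
  have l_x: "l n x = (SUP b\<in>{b\<in>S. a b \<noteq> 0}. l n b)"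
    using orth S unfolding l_orthogonal_def x_eq by blast
  show "l m (F x) \<le> l n x"
    unfolding F_x
  proof (rule l_sum_scale_le_bound[OF S(1) F_b])
    fix b assume b: "b \<in> S" "a b \<noteq> 0"
    have "l n b \<le> l n x"
      unfolding l_x using b by (auto intro: SUP_upper)
    then show "l m (F b) \<le> l n x"
      using F_B(2) S(2) b(1) by (blast intro: order_trans)
  qed
qed

lemma orth_basis_extend:
  assumes B: "orth_basis sc (C n) (l n) B"
    and \<phi>: "\<And>b. b \<in> B \<Longrightarrow> \<phi> b \<in> C m" "\<And>b. b \<in> B \<Longrightarrow> l m (\<phi> b) \<le> l n b"
  obtains F where "lin_on sc sc (C n) F" "\<And>b. b \<in> B \<Longrightarrow> F b = \<phi> b"
    "\<And>x. x \<in> C n \<Longrightarrow> F x \<in> C m" "\<And>x. x \<in> C n \<Longrightarrow> l m (F x) \<le> l n x"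
proof -
  interpret P: vector_space_pair sc sc ..
  have indep: "independent B"
    using B unfolding orth_basis_iff by auto
  define F where "F = P.construct B \<phi>"
  interpret F: Vector_Spaces.linear sc sc F
    unfolding F_def using P.linear_construct[OF indep] .
  have F_B: "F b = \<phi> b" if "b \<in> B" for b
    unfolding F_def using P.construct_basis[OF indep that] .
  have F: "lin_on sc sc (C n) F"
    unfolding lin_on_def by (simp add: F.add F.scale)
  show ?thesis
    using that[OF F F_B] orth_basis_lin_on_le[OF B F] \<phi> F_B by simp
qed

section \<open>Filtered acyclic complexes are filtered contractible\<close>

definition contraction_at :: "int \<Rightarrow> ('v \<Rightarrow> 'v) \<Rightarrow> ('v \<Rightarrow> 'v) \<Rightarrow> bool"
  where "contraction_at n K' K \<longleftrightarrow> lin_on sc sc (C n) K \<and>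
    (\<forall>x\<in>C n. K x \<in> C (n + 1) \<and> l (n + 1) (K x) \<le> l n x \<and> d (n + 1) (K x) + K' (d n x) = x)"

lemma contraction_at_trivial: "C n = {0} \<Longrightarrow> contraction_at n (\<lambda>_. 0) (\<lambda>_. 0)"
  unfolding contraction_at_def
  using lin_on_const_zero[OF module_axioms] zero_mem_C[of "n + 1"] by (simp add: l_zero d_zero)

lemma contraction_at_residual_cycle:
  assumes K': "contraction_at (n - 1) K'' K'" and e: "e \<in> C n"
  shows "e - K' (d n e) \<in> C n" "d n (e - K' (d n e)) = 0" "l n (e - K' (d n e)) \<le> l n e"
proof -
  have K'_lin: "lin_on sc sc (C (n - 1)) K'"
    and K'_closed: "\<And>y. y \<in> C (n - 1) \<Longrightarrow> K' y \<in> C n"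
    and K'_le: "\<And>y. y \<in> C (n - 1) \<Longrightarrow> l n (K' y) \<le> l (n - 1) y"
    and K'_htpy: "\<And>y. y \<in> C (n - 1) \<Longrightarrow> d n (K' y) + K'' (d (n - 1) y) = y"
    using K' unfolding contraction_at_def by auto
  have de: "d n e \<in> C (n - 1)" using d_closed[OF e] .
  show "e - K' (d n e) \<in> C n"
    using e K'_closed[OF de] by (rule subspace_diff[OF subspace_C])
  have "K'' 0 = 0"
    using K'_htpy[OF zero_mem_C] lin_on_zero[OF K'_lin zero_mem_C] by (simp add: d_zero)
  then have "d n (K' (d n e)) = d n e"
    using K'_htpy[OF de] d_d[OF e] by simp
  then show "d n (e - K' (d n e)) = 0"
    using d_diff[OF e K'_closed[OF de]] by simp
  have "l n (K' (d n e)) \<le> l n e"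
    using K'_le[OF de] l_d_le[OF e] by (rule order_trans)
  then show "l n (e - K' (d n e)) \<le> l n e"
    using l_diff_le[OF e K'_closed[OF de]] by simp
qed

lemma contraction_at_step:
  assumes acyclic: "filtered_acyclic C d l" and B: "orth_basis sc (C n) (l n) B"
    and K': "contraction_at (n - 1) K'' K'"
  obtains K where "contraction_at n K' K"
proof -
  note z = contraction_at_residual_cycle[OF K']
  have "\<exists>w. w \<in> C (n + 1) \<and> d (n + 1) w = e - K' (d n e) \<and> l (n + 1) w \<le> l n e"
    if e: "e \<in> C n" for e
  proof -
    obtain w where "w \<in> C (n + 1)" "d (n + 1) w = e - K' (d n e)"
      "l (n + 1) w \<le> l n (e - K' (d n e))"
      using acyclic z(1,2)[OF e] unfolding filtered_acyclic_def by blast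
    then show ?thesis using order_trans[OF _ z(3)[OF e]] by blast
  qed
  then obtain \<phi> where \<phi>: "\<forall>e\<in>C n. \<phi> e \<in> C (n + 1) \<and> d (n + 1) (\<phi> e) = e - K' (d n e)
      \<and> l (n + 1) (\<phi> e) \<le> l n e"
    by (metis bchoice)
  have B_C: "B \<subseteq> C n" and span_B: "span B = C n"
    using B unfolding orth_basis_iff by auto
  have \<phi>_B: "\<phi> b \<in> C (n + 1)" "l (n + 1) (\<phi> b) \<le> l n b" if "b \<in> B" for b
    using \<phi> B_C that by auto
  obtain K where K_lin: "lin_on sc sc (C n) K" and K_B: "\<And>b. b \<in> B \<Longrightarrow> K b = \<phi> b"
    and K_closed: "\<And>x. x \<in> C n \<Longrightarrow> K x \<in> C (n + 1)"
    and K_le: "\<And>x. x \<in> C n \<Longrightarrow> l (n + 1) (K x) \<le> l n x"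
    using orth_basis_extend[OF B \<phi>_B] by blast
  have K'_lin: "lin_on sc sc (C (n - 1)) K'"
    using K' unfolding contraction_at_def by simp
  have "lin_on sc sc (C n) (\<lambda>x. d (n + 1) (K x) + K' (d n x))"
    using lin_on_plus[OF lin_on_comp[OF K_lin _ lin_on_d] lin_on_comp[OF lin_on_d _ K'_lin]]
      K_closed d_closed module_axioms by (simp add: image_subset_iff o_def)
  then have "d (n + 1) (K x) + K' (d n x) = id x" if "x \<in> C n" for x
    by (rule lin_on_eq_on_span[OF _ lin_on_id module_axioms module_axioms span_B _ that])
      (use K_B \<phi> B_C in auto)
  then have "contraction_at n K' K"
    unfolding contraction_at_def using K_lin K_closed K_le by simp
  then show ?thesis ..
qed

theorem filtered_acyclic_contractible:
  assumes acyclic: "filtered_acyclic C d l" and bases: "\<forall>k. \<exists>B. orth_basis sc (C k) (l k) B"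
    and bounded: "\<forall>k<0. C k = {0}"
  obtains K where "filtered_contraction sc C d l K"
proof -
  text \<open>\<open>K m\<close> is the component in degree \<open>m - 1\<close>; for \<open>m = 0\<close> the truncated \<open>m - 1 = 0\<close> makes
    \<open>stage\<close> the trivial statement \<open>contraction_at (-1) 0 0\<close>.\<close>
  define K where "K = rec_nat (\<lambda>_. 0) (\<lambda>m K'. SOME K. contraction_at (int m) K' K)"
  have stage: "contraction_at (int m - 1) (K (m - 1)) (K m)" for m
  proof (induction m)
    case 0
    show ?case using contraction_at_trivial bounded by (simp add: K_def)
  next
    case (Suc m)
    obtain B where B: "orth_basis sc (C (int m)) (l (int m)) B" using bases by blast
    obtain K' where "contraction_at (int m) (K m) K'"
      using contraction_at_step[OF acyclic B Suc.IH] .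
    moreover have "K (Suc m) = (SOME K'. contraction_at (int m) (K m) K')"
      by (simp add: K_def)
    ultimately show ?case by (simp add: someI)
  qed
  define H where "H k = K (nat (k + 1))" for k
  have H: "contraction_at k (H (k - 1)) (H k)" for k
  proof (cases "k < -1")
    case True
    then show ?thesis using contraction_at_trivial bounded by (simp add: H_def K_def)
  next
    case False
    then have "int (nat (k + 1)) - 1 = k" "nat (k + 1) - 1 = nat (k - 1 + 1)" by simp_all
    then show ?thesis using stage[of "nat (k + 1)"] by (simp add: H_def)
  qed
  have "filtered_contraction sc C d l H"
    using H unfolding filtered_contraction_def filtered_homotopy_op_def contraction_at_def by simp
  then show ?thesis ..
qed

end

section \<open>The mapping cone\<close>

definition prod_scale :: "('k \<Rightarrow> 'v \<Rightarrow> 'v) \<Rightarrow> ('k \<Rightarrow> 'w \<Rightarrow> 'w) \<Rightarrow> 'k \<Rightarrow> 'v \<times> 'w \<Rightarrow> 'v \<times> 'w"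
  where "prod_scale s1 s2 a z = (s1 a (fst z), s2 a (snd z))"

lemma vector_space_prod_scale:
  assumes "vector_space s1" "vector_space s2"
  shows "vector_space (prod_scale s1 s2)"
proof -
  interpret s1: vector_space s1 by fact
  interpret s2: vector_space s2 by fact
  show ?thesis
    by unfold_locales
      (simp_all add: prod_scale_def s1.scale_right_distrib s2.scale_right_distrib
        s1.scale_left_distrib s2.scale_left_distrib)
qed

lemma lin_on_fst: "lin_on (prod_scale s1 s2) s1 A fst"
  and lin_on_snd: "lin_on (prod_scale s1 s2) s2 A snd"
  unfolding lin_on_def prod_scale_def by simp_all

lemma lin_on_Pair_zero_left: "module s1 \<Longrightarrow> lin_on s2 (prod_scale s1 s2) A (\<lambda>y. (0, y))"
  unfolding lin_on_def prod_scale_def by (simp add: module.scale_zero_right)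

lemma lin_on_Pair_zero_right: "module s2 \<Longrightarrow> lin_on s1 (prod_scale s1 s2) A (\<lambda>x. (x, 0))"
  unfolding lin_on_def prod_scale_def by (simp add: module.scale_zero_right)

definition cone :: "(int \<Rightarrow> 'v set) \<Rightarrow> (int \<Rightarrow> 'w set) \<Rightarrow> int \<Rightarrow> ('v \<times> 'w) set"
  where "cone C D n = C (n - 1) \<times> D n"

definition cone_d :: "(int \<Rightarrow> 'v \<Rightarrow> 'v::uminus) \<Rightarrow> (int \<Rightarrow> 'w \<Rightarrow> 'w::plus) \<Rightarrow> (int \<Rightarrow> 'v \<Rightarrow> 'w)
    \<Rightarrow> int \<Rightarrow> 'v \<times> 'w \<Rightarrow> 'v \<times> 'w"
  where "cone_d dC dD f n z = (- dC (n - 1) (fst z), f (n - 1) (fst z) + dD n (snd z))"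

definition cone_l :: "(int \<Rightarrow> 'v \<Rightarrow> ereal) \<Rightarrow> (int \<Rightarrow> 'w \<Rightarrow> ereal) \<Rightarrow> int \<Rightarrow> 'v \<times> 'w \<Rightarrow> ereal"
  where "cone_l lC lD n z = max (lC (n - 1) (fst z)) (lD n (snd z))"

lemma induces_homology_isoD_surj:
  assumes "induces_homology_iso C dC lC D dD lD f t k"
    and "z \<in> D k" "dD k z = 0" "lD k z \<le> ereal t"
  obtains c w where "c \<in> C k" "dC k c = 0" "lC k c \<le> ereal t"
    "w \<in> D (k + 1)" "lD (k + 1) w \<le> ereal t" "z = f k c + dD (k + 1) w"
  using assms unfolding induces_homology_iso_def sub_le_def by blast

lemma induces_homology_isoD_inj:
  assumes "induces_homology_iso C dC lC D dD lD f t k"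
    and "c \<in> C k" "dC k c = 0" "lC k c \<le> ereal t"
    and "y \<in> D (k + 1)" "lD (k + 1) y \<le> ereal t" "f k c = dD (k + 1) y"
  obtains b where "b \<in> C (k + 1)" "lC (k + 1) b \<le> ereal t" "c = dC (k + 1) b"
  using assms unfolding induces_homology_iso_def sub_le_def by blast

locale asc_filtered_map = C: asc_complex sC C dC lC + D: asc_complex sD D dD lD
  for sC :: "'k::field \<Rightarrow> 'v::ab_group_add \<Rightarrow> 'v" and C dC lC
    and sD :: "'k \<Rightarrow> 'w::ab_group_add \<Rightarrow> 'w" and D dD lD +
  fixes f :: "int \<Rightarrow> 'v \<Rightarrow> 'w"
  assumes filtered_chain_map: "filtered_chain_map sC C dC lC sD D dD lD f"
begin

lemma filtered_chain_mapD:
  "\<forall>k. \<forall>x\<in>C k. f k x \<in> D k"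
  "\<forall>k. lin_on sC sD (C k) (f k)"
  "\<forall>k. \<forall>x\<in>C k. dD k (f k x) = f (k - 1) (dC k x)"
  "\<forall>k. \<forall>x\<in>C k. lD k (f k x) \<le> lC k x"
  using filtered_chain_map unfolding filtered_chain_map_def by simp_all

lemma f_closed: "x \<in> C k \<Longrightarrow> f k x \<in> D k"
  using filtered_chain_mapD(1) by blast

lemma lin_on_f: "lin_on sC sD (C k) (f k)"
  using filtered_chain_mapD(2) by blast

lemma d_f: "x \<in> C k \<Longrightarrow> dD k (f k x) = f (k - 1) (dC k x)"
  using filtered_chain_mapD(3) by blast

lemma l_f_le: "x \<in> C k \<Longrightarrow> lD k (f k x) \<le> lC k x"
  using filtered_chain_mapD(4) by blast

lemma f_zero: "f k 0 = 0"
  using lin_on_zero[OF lin_on_f C.zero_mem_C] .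

lemma f_uminus: "x \<in> C k \<Longrightarrow> f k (- x) = - f k x"
  using lin_on_neg[OF lin_on_f C.module_axioms C.subspace_C] .

lemma f_diff: "x \<in> C k \<Longrightarrow> y \<in> C k \<Longrightarrow> f k (x - y) = f k x - f k y"
  using lin_on_diff[OF lin_on_f C.module_axioms C.subspace_C] .

lemma module_prod_scale: "module (prod_scale sC sD)"
  using vector_space_prod_scale[OF C.vector_space_axioms D.vector_space_axioms]
  by (simp add: module_iff_vector_space)

lemma cone_subspace: "module.subspace (prod_scale sC sD) (cone C D n)"
  unfolding module.subspace_def[OF module_prod_scale] cone_def prod_scale_def
  by (auto simp: zero_prod_def C.zero_mem_C D.zero_mem_C C.subspace_add[OF C.subspace_C]
      D.subspace_add[OF D.subspace_C] C.subspace_scale[OF C.subspace_C]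
      D.subspace_scale[OF D.subspace_C])

lemma cone_d_closed: "z \<in> cone C D n \<Longrightarrow> cone_d dC dD f n z \<in> cone C D (n - 1)"
  using C.d_closed[of "fst z" "n - 1"] D.d_closed[of "snd z" n] f_closed[of "fst z" "n - 1"]
  unfolding cone_def cone_d_def
  by (auto intro!: C.subspace_neg[OF C.subspace_C] D.subspace_add[OF D.subspace_C])

lemma lin_on_cone_d: "lin_on (prod_scale sC sD) (prod_scale sC sD) (cone C D n) (cone_d dC dD f n)"
  unfolding lin_on_def cone_def cone_d_def prod_scale_def
  by (auto simp: lin_on_add[OF C.lin_on_d] lin_on_add[OF D.lin_on_d] lin_on_add[OF lin_on_f]
      lin_on_scale[OF C.lin_on_d] lin_on_scale[OF D.lin_on_d] lin_on_scale[OF lin_on_f]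
      C.scale_minus_right D.scale_right_distrib)

lemma cone_d_d: "z \<in> cone C D n \<Longrightarrow> cone_d dC dD f (n - 1) (cone_d dC dD f n z) = 0"
  using C.d_closed[of "fst z" "n - 1"] C.d_d[of "fst z" "n - 1"] d_f[of "fst z" "n - 1"]
    D.d_closed[of "snd z" n] D.d_d[of "snd z" n] f_closed[of "fst z" "n - 1"]
  unfolding cone_def cone_d_def
  by (auto simp: C.d_uminus f_uminus lin_on_add[OF D.lin_on_d] zero_prod_def)

lemma cone_l_neq_infinity: "z \<in> cone C D n \<Longrightarrow> cone_l lC lD n z \<noteq> \<infinity>"
  unfolding cone_def cone_l_def using C.l_neq_infinity D.l_neq_infinity by (auto simp: max_def)

lemma cone_l_eq_minf_iff: "z \<in> cone C D n \<Longrightarrow> cone_l lC lD n z = - \<infinity> \<longleftrightarrow> z = 0"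
  unfolding cone_def cone_l_def using C.l_eq_minf_iff D.l_eq_minf_iff
  by (auto simp: max_def zero_prod_def C.l_zero D.l_zero)

lemma cone_l_d_le: "z \<in> cone C D n \<Longrightarrow> cone_l lC lD (n - 1) (cone_d dC dD f n z) \<le> cone_l lC lD n z"
proof -
  assume "z \<in> cone C D n"
  then have x: "fst z \<in> C (n - 1)" and y: "snd z \<in> D n" by (auto simp: cone_def)
  have "lC (n - 1 - 1) (- dC (n - 1) (fst z)) \<le> lC (n - 1) (fst z)"
    using C.l_uminus[OF C.d_closed[OF x]] C.l_d_le[OF x] by simp
  moreover have "lD (n - 1) (f (n - 1) (fst z) + dD n (snd z)) \<le> max (lC (n - 1) (fst z)) (lD n (snd z))"
    using D.l_add_le[OF f_closed[OF x] D.d_closed[OF y]] l_f_le[OF x] D.l_d_le[OF y]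
    by (auto simp: max_def split: if_splits)
  ultimately show ?thesis
    unfolding cone_l_def cone_d_def by (auto simp: le_max_iff_disj)
qed

lemma cone_l_sum_scale_le:
  assumes S: "finite S" "S \<subseteq> cone C D n"
  shows "cone_l lC lD n (\<Sum>z\<in>S. prod_scale sC sD (c z) z) \<le> (SUP z\<in>{z\<in>S. c z \<noteq> 0}. cone_l lC lD n z)"
    (is "_ \<le> ?T")
proof -
  have le_T: "lC (n - 1) (fst z) \<le> ?T" "lD n (snd z) \<le> ?T" if "z \<in> S" "c z \<noteq> 0" for z
    using that by (auto simp: cone_l_def intro!: SUP_upper2)
  have "lC (n - 1) (\<Sum>z\<in>S. sC (c z) (fst z)) \<le> ?T"
    using S le_T(1) by (intro C.l_sum_scale_le_bound) (auto simp: cone_def)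
  moreover have "lD n (\<Sum>z\<in>S. sD (c z) (snd z)) \<le> ?T"
    using S le_T(2) by (intro D.l_sum_scale_le_bound) (auto simp: cone_def)
  ultimately show ?thesis
    by (simp add: cone_l_def prod_scale_def fst_sum snd_sum)
qed

lemma cone_asc_chain_complex:
  "asc_chain_complex (prod_scale sC sD) (cone C D) (cone_d dC dD f) (cone_l lC lD)"
  unfolding asc_chain_complex_def
  using vector_space_prod_scale[OF C.vector_space_axioms D.vector_space_axioms] cone_subspace
    cone_d_closed lin_on_cone_d cone_d_d cone_l_neq_infinity cone_l_eq_minf_iff
    cone_l_sum_scale_le cone_l_d_le
  by blast

sublocale cone: asc_complex "prod_scale sC sD" "cone C D" "cone_d dC dD f" "cone_l lC lD"
  by unfold_locales (rule cone_asc_chain_complex)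

lemma Pair_zero_mem_cone:
  "x \<in> C (n - 1) \<Longrightarrow> (x, 0) \<in> cone C D n" "y \<in> D n \<Longrightarrow> (0, y) \<in> cone C D n"
  using C.zero_mem_C D.zero_mem_C by (simp_all add: cone_def)

lemma cone_span:
  assumes "C.span BC = C (n - 1)" "D.span BD = D n"
  shows "cone.span ((\<lambda>x. (x, 0)) ` BC \<union> (\<lambda>y. (0, y)) ` BD) = cone C D n" (is "cone.span ?B = _")
proof
  interpret inl: module_hom sC "prod_scale sC sD" "\<lambda>x. (x, 0)"
    by unfold_locales (simp_all add: prod_scale_def D.scale_zero_right)
  interpret inr: module_hom sD "prod_scale sC sD" "\<lambda>y. (0, y)"
    by unfold_locales (simp_all add: prod_scale_def C.scale_zero_right)
  have "BC \<subseteq> C (n - 1)" "BD \<subseteq> D n"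
    using C.span_superset[of BC] D.span_superset[of BD] assms by simp_all
  then have "?B \<subseteq> cone C D n"
    using Pair_zero_mem_cone by auto
  then show "cone.span ?B \<subseteq> cone C D n"
    by (rule cone.span_minimal[OF _ cone.subspace_C])
  show "cone C D n \<subseteq> cone.span ?B"
  proof
    fix z assume "z \<in> cone C D n"
    then have "(fst z, 0) \<in> cone.span ((\<lambda>x. (x, 0)) ` BC)" "(0, snd z) \<in> cone.span ((\<lambda>y. (0, y)) ` BD)"
      using assms by (auto simp: cone_def inl.span_image inr.span_image)
    then have "(fst z, 0) + (0, snd z) \<in> cone.span ?B"
      by (meson cone.span_add cone.span_mono in_mono sup_ge1 sup_ge2)
    then show "z \<in> cone.span ?B" by simp
  qed
qed

lemma cone_l_fst_sum:
  assumes BC: "l_orthogonal sC (lC (n - 1)) BC" and BD: "0 \<notin> BD"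
    and S: "finite S" "S \<subseteq> (\<lambda>x. (x, 0)) ` BC \<union> (\<lambda>y. (0, y)) ` BD"
  shows "lC (n - 1) (fst (\<Sum>z\<in>S. prod_scale sC sD (c z) z))
    = (SUP z\<in>{z\<in>S. snd z = 0 \<and> c z \<noteq> 0}. cone_l lC lD n z)"
proof -
  define S1 where "S1 = {z\<in>S. snd z = 0}"
  have S1: "z = (fst z, 0)" "fst z \<in> BC" if "z \<in> S1" for z
    using that S(2) BD by (auto simp: S1_def)
  have fst_S: "fst z = 0" if "z \<in> S - S1" for z
    using that S(2) by (auto simp: S1_def)
  have "fst (\<Sum>z\<in>S. prod_scale sC sD (c z) z) = (\<Sum>z\<in>S. sC (c z) (fst z))"
    by (simp add: fst_sum prod_scale_def)
  also have "\<dots> = (\<Sum>z\<in>S1. sC (c z) (fst z))"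
    using S(1) fst_S by (intro sum.mono_neutral_right) (auto simp: S1_def C.scale_zero_right)
  finally have "lC (n - 1) (fst (\<Sum>z\<in>S. prod_scale sC sD (c z) z))
      = lC (n - 1) (\<Sum>z\<in>S1. sC (c z) (fst z))" by simp
  also have "\<dots> = (SUP z\<in>{z\<in>S1. c z \<noteq> 0}. lC (n - 1) (fst z))"
    using S1 S(1) by (intro l_orthogonal_sum_inj[OF BC]) (auto simp: S1_def inj_on_def)
  also have "\<dots> = (SUP z\<in>{z\<in>S1. c z \<noteq> 0}. cone_l lC lD n z)"
  proof (rule SUP_cong)
    fix z assume "z \<in> {z\<in>S1. c z \<noteq> 0}"
    then have "z = (fst z, 0)" using S1(1) by blast
    then show "lC (n - 1) (fst z) = cone_l lC lD n z"
      by (metis cone_l_def D.l_zero fst_conv snd_conv max_bot2 bot_ereal_def)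
  qed simp
  also have "{z\<in>S1. c z \<noteq> 0} = {z\<in>S. snd z = 0 \<and> c z \<noteq> 0}"
    by (auto simp: S1_def)
  finally show ?thesis .
qed

lemma cone_l_snd_sum:
  assumes BD: "l_orthogonal sD (lD n) BD"
    and S: "finite S" "S \<subseteq> (\<lambda>x. (x, 0)) ` BC \<union> (\<lambda>y. (0, y)) ` BD"
  shows "lD n (snd (\<Sum>z\<in>S. prod_scale sC sD (c z) z))
    = (SUP z\<in>{z\<in>S. snd z \<noteq> 0 \<and> c z \<noteq> 0}. cone_l lC lD n z)"
proof -
  define S2 where "S2 = {z\<in>S. snd z \<noteq> 0}"
  have S2: "z = (0, snd z)" "snd z \<in> BD" if "z \<in> S2" for z
    using that S(2) by (auto simp: S2_def)
  have "snd (\<Sum>z\<in>S. prod_scale sC sD (c z) z) = (\<Sum>z\<in>S. sD (c z) (snd z))"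
    by (simp add: snd_sum prod_scale_def)
  also have "\<dots> = (\<Sum>z\<in>S2. sD (c z) (snd z))"
    using S(1) by (intro sum.mono_neutral_right) (auto simp: S2_def D.scale_zero_right)
  finally have "lD n (snd (\<Sum>z\<in>S. prod_scale sC sD (c z) z))
      = lD n (\<Sum>z\<in>S2. sD (c z) (snd z))" by simp
  also have "\<dots> = (SUP z\<in>{z\<in>S2. c z \<noteq> 0}. lD n (snd z))"
    using S2 S(1) by (intro l_orthogonal_sum_inj[OF BD] inj_onI) (auto simp: S2_def, metis)
  also have "\<dots> = (SUP z\<in>{z\<in>S2. c z \<noteq> 0}. cone_l lC lD n z)"
  proof (rule SUP_cong)
    fix z assume "z \<in> {z\<in>S2. c z \<noteq> 0}"
    then have "z = (0, snd z)" using S2(1) by blast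
    then show "lD n (snd z) = cone_l lC lD n z"
      by (metis cone_l_def C.l_zero fst_conv snd_conv max_bot bot_ereal_def)
  qed simp
  also have "{z\<in>S2. c z \<noteq> 0} = {z\<in>S. snd z \<noteq> 0 \<and> c z \<noteq> 0}"
    by (auto simp: S2_def)
  finally show ?thesis .
qed

lemma cone_l_orthogonal:
  assumes "l_orthogonal sC (lC (n - 1)) BC" "l_orthogonal sD (lD n) BD" "0 \<notin> BD"
  shows "l_orthogonal (prod_scale sC sD) (cone_l lC lD n) ((\<lambda>x. (x, 0)) ` BC \<union> (\<lambda>y. (0, y)) ` BD)"
  unfolding l_orthogonal_def
proof (intro allI impI, elim conjE)
  fix S and c :: "'v \<times> 'w \<Rightarrow> 'k"
  assume S: "finite S" "S \<subseteq> (\<lambda>x. (x, 0)) ` BC \<union> (\<lambda>y. (0, y)) ` BD"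
  have "{z\<in>S. c z \<noteq> 0} = {z\<in>S. snd z = 0 \<and> c z \<noteq> 0} \<union> {z\<in>S. snd z \<noteq> 0 \<and> c z \<noteq> 0}"
    by auto
  then show "cone_l lC lD n (\<Sum>z\<in>S. prod_scale sC sD (c z) z) = (SUP z\<in>{z\<in>S. c z \<noteq> 0}. cone_l lC lD n z)"
    unfolding cone_l_def[of lC lD n "sum _ _"] cone_l_fst_sum[OF assms(1,3) S] cone_l_snd_sum[OF assms(2) S]
    by (simp add: SUP_union sup_max)
qed

lemma cone_orth_basis:
  assumes "orth_basis sC (C (n - 1)) (lC (n - 1)) BC" "orth_basis sD (D n) (lD n) BD"
  shows "orth_basis (prod_scale sC sD) (cone C D n) (cone_l lC lD n)
    ((\<lambda>x. (x, 0)) ` BC \<union> (\<lambda>y. (0, y)) ` BD)" (is "orth_basis _ _ _ ?B")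
proof -
  have BC: "BC \<subseteq> C (n - 1)" "0 \<notin> BC" "C.span BC = C (n - 1)" "l_orthogonal sC (lC (n - 1)) BC"
    and BD: "BD \<subseteq> D n" "0 \<notin> BD" "D.span BD = D n" "l_orthogonal sD (lD n) BD"
    using assms unfolding orth_basis_iff by auto
  have "?B \<subseteq> cone C D n" "0 \<notin> ?B"
    using BC BD Pair_zero_mem_cone by (auto simp: zero_prod_def)
  moreover have "l_orthogonal (prod_scale sC sD) (cone_l lC lD n) ?B"
    using cone_l_orthogonal BC(4) BD(4,2) .
  ultimately show ?thesis
    unfolding orth_basis_iff using cone.l_orthogonal_independent cone_span[OF BC(3) BD(3)] by blast
qed

lemma cone_bounded_below: "\<forall>k<0. C k = {0} \<Longrightarrow> \<forall>k<0. D k = {0} \<Longrightarrow> \<forall>k<0. cone C D k = {0}"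
  by (simp add: cone_def zero_prod_def)

lemma homology_iso_cone_lift:
  assumes iso: "\<forall>k t. induces_homology_iso C dC lC D dD lD f t k"
    and c: "c \<in> C (n - 1)" "dC (n - 1) c = 0" "lC (n - 1) c \<le> ereal r"
    and y: "y \<in> D n" "f (n - 1) c + dD n y = 0" "lD n y \<le> ereal r"
  obtains c' y' where "c' \<in> C n" "y' \<in> D (n + 1)" "dC n c' = - c" "f n c' + dD (n + 1) y' = y"
    "lC n c' \<le> ereal r" "lD (n + 1) y' \<le> ereal r"
proof -
  have "f (n - 1) c = - dD n y"
    using y(2) by (simp add: add_eq_0_iff2)
  then have "f (n - 1) c = dD n (- y)"
    using D.d_uminus[OF y(1)] by simp
  moreover have "- y \<in> D n" "lD n (- y) \<le> ereal r"
    using D.subspace_neg[OF D.subspace_C y(1)] D.l_uminus[OF y(1)] y(3) by simp_all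
  ultimately obtain b where b: "b \<in> C n" "lC n b \<le> ereal r" "c = dC n b"
    using induces_homology_isoD_inj[of C dC lC D dD lD f r "n - 1" c "- y"] iso c by auto
  define z where "z = y + f n b"
  have z: "z \<in> D n" "lD n z \<le> ereal r"
    using D.subspace_add[OF D.subspace_C y(1) f_closed[OF b(1)]]
      order_trans[OF D.l_add_le[OF y(1) f_closed[OF b(1)]]] y(3) order_trans[OF l_f_le[OF b(1)] b(2)]
    by (simp_all add: z_def)
  have "dD n z = 0"
    using lin_on_add[OF D.lin_on_d y(1) f_closed[OF b(1)]] d_f[OF b(1)] y(2) b(3)
    by (simp add: z_def add.commute)
  then obtain c0 w where c0: "c0 \<in> C n" "dC n c0 = 0" "lC n c0 \<le> ereal r"
    and w: "w \<in> D (n + 1)" "lD (n + 1) w \<le> ereal r" "z = f n c0 + dD (n + 1) w"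
    using induces_homology_isoD_surj[of C dC lC D dD lD f r n z] iso z by blast
  show ?thesis
  proof
    show "c0 - b \<in> C n" using C.subspace_diff[OF C.subspace_C c0(1) b(1)] .
    show "dC n (c0 - b) = - c" using C.d_diff[OF c0(1) b(1)] c0(2) b(3) by simp
    have "f n (c0 - b) + dD (n + 1) w = (f n c0 + dD (n + 1) w) - f n b"
      using f_diff[OF c0(1) b(1)] by (simp add: algebra_simps)
    then show "f n (c0 - b) + dD (n + 1) w = y" by (simp add: w(3)[symmetric] z_def)
    show "lC n (c0 - b) \<le> ereal r"
      by (rule order_trans[OF C.l_diff_le[OF c0(1) b(1)]]) (simp add: c0(3) b(2))
  qed (fact w)+
qed

lemma cone_filtered_acyclic:
  assumes iso: "\<forall>k t. induces_homology_iso C dC lC D dD lD f t k"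
  shows "filtered_acyclic (cone C D) (cone_d dC dD f) (cone_l lC lD)"
  unfolding filtered_acyclic_def
proof (intro allI ballI impI)
  fix n z assume z: "z \<in> cone C D n" and cycle: "cone_d dC dD f n z = 0"
  show "\<exists>w\<in>cone C D (n + 1). cone_d dC dD f (n + 1) w = z \<and> cone_l lC lD (n + 1) w \<le> cone_l lC lD n z"
  proof (cases "z = 0")
    case True
    then show ?thesis
      by (intro bexI[of _ 0]) (simp_all add: cone.zero_mem_C cone.d_zero cone.l_zero)
  next
    case False
    then obtain r where r: "cone_l lC lD n z = ereal r" using cone.l_finite[OF z] by blast
    have "fst z \<in> C (n - 1)" "dC (n - 1) (fst z) = 0" "lC (n - 1) (fst z) \<le> ereal r"
      "snd z \<in> D n" "f (n - 1) (fst z) + dD n (snd z) = 0" "lD n (snd z) \<le> ereal r"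
      using z cycle r[unfolded cone_l_def, symmetric]
      by (auto simp: cone_def cone_d_def zero_prod_def)
    then obtain c' y' where "c' \<in> C n" "y' \<in> D (n + 1)" "dC n c' = - fst z"
      "f n c' + dD (n + 1) y' = snd z" "lC n c' \<le> ereal r" "lD (n + 1) y' \<le> ereal r"
      by (rule homology_iso_cone_lift[OF iso])
    then show ?thesis
      by (intro bexI[of _ "(c', y')"]) (auto simp: cone_def cone_d_def cone_l_def r[unfolded cone_l_def])
  qed
qed

lemma cone_contraction_D_part:
  assumes K: "filtered_contraction (prod_scale sC sD) (cone C D) (cone_d dC dD f) (cone_l lC lD) K"
  defines "g \<equiv> \<lambda>k y. fst (K k (0, y))" and "KD \<equiv> \<lambda>k y. snd (K k (0, y))"
  shows "filtered_chain_map sD D dD lD sC C dC lC g" and "filtered_homotopy_op sD D lD KD"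
    and "\<forall>k. \<forall>y\<in>D k. dD (k + 1) (KD k y) + KD (k - 1) (dD k y) = y - f k (g k y)"
proof -
  note K_closed = filtered_contractionD(1)[OF K] and K_lin = filtered_contractionD(2)[OF K]
    and K_le = filtered_contractionD(3)[OF K] and K_htpy = filtered_contractionD(4)[OF K]
  note inr = Pair_zero_mem_cone(2)
  have lin: "lin_on sD (prod_scale sC sD) (D k) (\<lambda>y. K k (0, y))" for k
  proof -
    have "lin_on sD (prod_scale sC sD) (D k) (K k \<circ> (\<lambda>y. (0, y)))"
      by (rule lin_on_comp[OF lin_on_Pair_zero_left[OF C.module_axioms] _ K_lin]) (use inr in auto)
    then show ?thesis by (simp add: o_def)
  qed
  have closed: "g k y \<in> C k" "KD k y \<in> D (k + 1)" if "y \<in> D k" for y k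
    using K_closed[OF inr[OF that]] by (auto simp: g_def KD_def cone_def)
  have le: "lC k (g k y) \<le> lD k y" "lD (k + 1) (KD k y) \<le> lD k y" if "y \<in> D k" for y k
    using K_le[OF inr[OF that]] by (auto simp: g_def KD_def cone_l_def C.l_zero)
  have htpy: "- dC k (g k y) + g (k - 1) (dD k y) = 0"
    "f k (g k y) + dD (k + 1) (KD k y) + KD (k - 1) (dD k y) = y" if "y \<in> D k" for y k
    using K_htpy[OF inr[OF that]] by (auto simp: g_def KD_def cone_d_def C.d_zero f_zero prod_eq_iff)
  show "filtered_chain_map sD D dD lD sC C dC lC g"
    unfolding filtered_chain_map_def
    using closed(1) le(1) htpy(1) lin_on_comp[OF lin _ lin_on_fst[where A = UNIV]]
    by (auto simp: g_def o_def add_eq_0_iff2)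
  show "filtered_homotopy_op sD D lD KD"
    unfolding filtered_homotopy_op_def
    using closed(2) le(2) lin_on_comp[OF lin _ lin_on_snd[where A = UNIV]] by (auto simp: KD_def o_def)
  show "\<forall>k. \<forall>y\<in>D k. dD (k + 1) (KD k y) + KD (k - 1) (dD k y) = y - f k (g k y)"
    using htpy(2) by (auto simp: algebra_simps)
qed

lemma cone_contraction_C_part:
  assumes K: "filtered_contraction (prod_scale sC sD) (cone C D) (cone_d dC dD f) (cone_l lC lD) K"
  defines "g \<equiv> \<lambda>k y. fst (K k (0, y))" and "KC \<equiv> \<lambda>k x. - fst (K (k + 1) (x, 0))"
  shows "filtered_homotopy_op sC C lC KC"
    and "\<forall>k. \<forall>x\<in>C k. dC (k + 1) (KC k x) + KC (k - 1) (dC k x) = x - g k (f k x)"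
proof -
  note K_closed = filtered_contractionD(1)[OF K] and K_lin = filtered_contractionD(2)[OF K]
    and K_le = filtered_contractionD(3)[OF K] and K_htpy = filtered_contractionD(4)[OF K]
  have inl: "(x, 0) \<in> cone C D (k + 1)" if "x \<in> C k" for x k
    using Pair_zero_mem_cone(1)[of x "k + 1"] that by simp
  have lin: "lin_on sC (prod_scale sC sD) (C k) (\<lambda>x. K (k + 1) (x, 0))" for k
  proof -
    have "lin_on sC (prod_scale sC sD) (C k) (K (k + 1) \<circ> (\<lambda>x. (x, 0)))"
      by (rule lin_on_comp[OF lin_on_Pair_zero_right[OF D.module_axioms] _ K_lin]) (use inl in auto)
    then show ?thesis by (simp add: o_def)
  qed
  have closed: "fst (K (k + 1) (x, 0)) \<in> C (k + 1)" if "x \<in> C k" for x k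
    using K_closed[OF inl[OF that]] by (simp add: cone_def mem_Times_iff add.commute)
  have le: "lC (k + 1) (KC k x) \<le> lC k x" if "x \<in> C k" for x k
    using K_le[OF inl[OF that]] C.l_uminus[OF closed[OF that]]
    by (simp add: KC_def cone_l_def D.l_zero add.commute)
  show "filtered_homotopy_op sC C lC KC"
    unfolding filtered_homotopy_op_def
    using C.subspace_neg[OF C.subspace_C closed] le lin_on_comp[OF lin_on_comp[OF lin _
        lin_on_fst[where A = UNIV]] _ lin_on_uminus[OF C.module_axioms, where A = UNIV]]
    by (auto simp: KC_def o_def)
  show "\<forall>k. \<forall>x\<in>C k. dC (k + 1) (KC k x) + KC (k - 1) (dC k x) = x - g k (f k x)"
  proof (intro allI ballI)
    fix k x assume x: "x \<in> C k"
    have "cone_d dC dD f (k + 1) (x, 0) = (0, f k x) - (dC k x, 0)"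
      by (simp add: cone_d_def D.d_zero)
    moreover have "K k ((0, f k x) - (dC k x, 0)) = K k (0, f k x) - K k (dC k x, 0)"
      using Pair_zero_mem_cone C.d_closed[OF x] f_closed[OF x]
      by (intro lin_on_diff[OF K_lin cone.module_axioms cone.subspace_C]) simp_all
    ultimately have "fst (K k (cone_d dC dD f (k + 1) (x, 0))) = g k (f k x) + KC (k - 1) (dC k x)"
      by (simp add: g_def KC_def)
    moreover have "fst (cone_d dC dD f (k + 2) (K (k + 1) (x, 0))) = dC (k + 1) (KC k x)"
      using C.d_uminus[OF closed[OF x]] by (simp add: cone_d_def KC_def add.commute)
    ultimately show "dC (k + 1) (KC k x) + KC (k - 1) (dC k x) = x - g k (f k x)"
      using arg_cong[OF K_htpy[OF inl[OF x]], of fst] by (simp add: algebra_simps)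
  qed
qed

lemma homotopy_equiv_of_cone_contraction:
  assumes "filtered_contraction (prod_scale sC sD) (cone C D) (cone_d dC dD f) (cone_l lC lD) K"
  shows "filtered_homotopy_equiv sC C dC lC sD D dD lD f"
  unfolding filtered_homotopy_equiv_def
  using filtered_chain_map cone_contraction_D_part[OF assms] cone_contraction_C_part[OF assms] by blast

end

theorem proposition4p2:
  fixes sC :: "'k::field \<Rightarrow> 'v::ab_group_add \<Rightarrow> 'v"
    and sD :: "'k \<Rightarrow> 'w::ab_group_add \<Rightarrow> 'w"
    and C :: "int \<Rightarrow> 'v set" and dC :: "int \<Rightarrow> 'v \<Rightarrow> 'v" and lC :: "int \<Rightarrow> 'v \<Rightarrow> ereal"
    and D :: "int \<Rightarrow> 'w set" and dD :: "int \<Rightarrow> 'w \<Rightarrow> 'w" and lD :: "int \<Rightarrow> 'w \<Rightarrow> ereal"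
    and f :: "int \<Rightarrow> 'v \<Rightarrow> 'w"
  assumes "asc_chain_complex sC C dC lC"
    and "asc_chain_complex sD D dD lD"
    and "\<forall>k. \<exists>B. orth_basis sC (C k) (lC k) B"
    and "\<forall>k. \<exists>B. orth_basis sD (D k) (lD k) B"
    and "\<forall>k<0. C k = {0}"
    and "\<forall>k<0. D k = {0}"
    and "filtered_quasi_iso sC C dC lC sD D dD lD f"
  shows "filtered_homotopy_equiv sC C dC lC sD D dD lD f"
proof -
  interpret asc_filtered_map sC C dC lC sD D dD lD f
    using assms(1,2,7) unfolding filtered_quasi_iso_def by unfold_locales blast+
  have "\<exists>B. orth_basis (prod_scale sC sD) (cone C D k) (cone_l lC lD k) B" for k
    using assms(3,4) cone_orth_basis by blast
  moreover have "filtered_acyclic (cone C D) (cone_d dC dD f) (cone_l lC lD)"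
    using assms(7) cone_filtered_acyclic unfolding filtered_quasi_iso_def by blast
  ultimately obtain K
    where "filtered_contraction (prod_scale sC sD) (cone C D) (cone_d dC dD f) (cone_l lC lD) K"
    using cone.filtered_acyclic_contractible cone_bounded_below[OF assms(5,6)] by blast
  then show ?thesis by (rule homotopy_equiv_of_cone_contraction)
qed

end
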